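(* Let $N\ge 3$ and $M\ge 2$ be integers, let $\theta\in\mathbb{R}$, and let $\mathbf{h}=[h_1,\dots,h_N]^T\in\mathbb{C}^{N}$ be such that $\mathbf{h}$ is not a scalar multiple of $\mathbf{a}(\theta)$. Let $\alpha,\beta\in\mathbb{C}$, $P>0$, $\tau\in[0,1]$, $\sigma_R>0$, $c_3\in\mathbb{C}\setminus\{0\}$, $L\ge 1$, and set $\gamma_1=P\tau$, $\gamma_2=\frac{(1-\tau)P}{N-2}$, $Q=\frac{\sigma_R^2}{2|c_3|^2L}$. With $\mathbf{A}(\theta)=\mathbf{b}(\theta)\mathbf{a}(\theta)^H$, $\dot{\mathbf{A}}(\theta)=\frac{d}{d\theta}\mathbf{A}(\theta)$ and $\mathbf{R}_x=\gamma_1\mathbf{t}_1\mathbf{t}_1^H+\gamma_2\sum_{i=3}^{N}\mathbf{t}_i\mathbf{t}_i^H$, define $$\mathrm{CRB}(\theta)=\frac{\sigma_R^2\,\mathrm{Tr}(\mathbf{A}^H\mathbf{A}\mathbf{R}_x)}{2|c_3|^2L\left(\mathrm{Tr}(\mathbf{A}^H\mathbf{A}\mathbf{R}_x)\,\mathrm{Tr}(\dot{\mathbf{A}}^H\dot{\mathbf{A}}\mathbf{R}_x)-|\mathrm{Tr}(\dot{\mathbf{A}}^H\mathbf{A}\mathbf{R}_x)|^2\right)}.$$ Then $$\mathrm{CRB}(\theta)=\frac{Q}{\gamma_1\|\mathbf{b}'\|^2N|\alpha|^2+\gamma_2M\left(\|\mathbf{a}'\|^2-\dfrac{\left(\sum_{i=1}^{N}-f_i't_i\right)^2+\left(\sum_{i=1}^{N}f_i'r_i\right)^2}{K-\frac{1}{N}(T^2+R^2)}\right)},$$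 where $\|\mathbf{b}'\|^2=\frac{\pi^2\cos^2(\theta)M(M^2-1)}{12}$ and $\|\mathbf{a}'\|^2=\frac{\pi^2\cos^2(\theta)N(N^2-1)}{12}$ are the squared norms of the derivatives of $\mathbf{b}(\theta)$ and $\mathbf{a}(\theta)$ with respect to $\theta$.
   Context: Steering vectors: $\mathbf{a}(\theta)\in\mathbb{C}^N$ has $i$-th entry $a_i=e^{-jf_i}$ with $f_i=\pi\sin(\theta)\frac{N-(2i-1)}{2}$, $i=1,\dots,N$; $\mathbf{b}(\theta)\in\mathbb{C}^M$ has $m$-th entry $e^{-j\pi\sin(\theta)\frac{M-(2m-1)}{2}}$, $m=1,\dots,M$. Here $f_i'=\frac{df_i}{d\theta}=\pi\cos(\theta)\frac{N-(2i-1)}{2}$. Define $\tilde{\mathbf{a}}=\mathbf{a}/\|\mathbf{a}\|$, $\tilde{\mathbf{h}}=\frac{\mathbf{h}-(\tilde{\mathbf{a}}^H\mathbf{h})\tilde{\mathbf{a}}}{\|\mathbf{h}-(\tilde{\mathbf{a}}^H\mathbf{h})\tilde{\mathbf{a}}\|}$, $\mathbf{t}_1=\alpha\tilde{\mathbf{a}}+\beta\tilde{\mathbf{h}}$, and let $\mathbf{t}_3,\dots,\mathbf{t}_N$ be an orthonormal basis of the orthogonal complement of $\mathrm{span}\{\tilde{\mathbf{a}},\tilde{\mathbf{h}}\}$ in $\mathbb{C}^N$. Scalar quantities (distinct from the vectors $\mathbf{t}_i$): writing $h_i=|h_i|e^{j\phi_i}$, $r_i=\mathrm{Re}(e^{jf_i}h_i)=|h_i|\cos(f_i+\phi_i)$,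 $t_i=\mathrm{Im}(e^{jf_i}h_i)=|h_i|\sin(f_i+\phi_i)$, $k_i=|h_i|^2$, $R=\sum_{i=1}^N r_i$, $T=\sum_{i=1}^N t_i$, $K=\sum_{i=1}^N k_i$. *)

theory Defs
  imports "HOL-Analysis.Analysis"
begin

text \<open>Vectors in C^n are represented as functions nat => complex, only the entries
  with index in {1..n} being relevant; matrices (M x N) as nat => nat => complex with
  row index in {1..M} and column index in {1..N}.\<close>

definition phase :: "nat \<Rightarrow> real \<Rightarrow> nat \<Rightarrow> real" where
  "phase n \<theta> i = pi * sin \<theta> * (real n - (2 * real i - 1)) / 2"

definition phase' :: "nat \<Rightarrow> real \<Rightarrow> nat \<Rightarrow> real" where
  "phase' n \<theta> i = pi * cos \<theta> * (real n - (2 * real i - 1)) / 2"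

text \<open>Steering vector with n entries: entry i is exp(-j f_i). a = steer N, b = steer M.\<close>
definition steer :: "nat \<Rightarrow> real \<Rightarrow> nat \<Rightarrow> complex" where
  "steer n \<theta> i = cis (- phase n \<theta> i)"

definition cinner :: "nat \<Rightarrow> (nat \<Rightarrow> complex) \<Rightarrow> (nat \<Rightarrow> complex) \<Rightarrow> complex" where
  "cinner n u v = (\<Sum>i=1..n. cnj (u i) * v i)"

definition vnorm :: "nat \<Rightarrow> (nat \<Rightarrow> complex) \<Rightarrow> real" where
  "vnorm n u = sqrt (\<Sum>i=1..n. (cmod (u i))\<^sup>2)"

definition atil :: "nat \<Rightarrow> real \<Rightarrow> nat \<Rightarrow> complex" where
  "atil N \<theta> i = steer N \<theta> i / of_real (vnorm N (steer N \<theta>))"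

definition hperp :: "nat \<Rightarrow> real \<Rightarrow> (nat \<Rightarrow> complex) \<Rightarrow> nat \<Rightarrow> complex" where
  "hperp N \<theta> h i = h i - cinner N (atil N \<theta>) h * atil N \<theta> i"

definition htil :: "nat \<Rightarrow> real \<Rightarrow> (nat \<Rightarrow> complex) \<Rightarrow> nat \<Rightarrow> complex" where
  "htil N \<theta> h i = hperp N \<theta> h i / of_real (vnorm N (hperp N \<theta> h))"

definition t1vec :: "nat \<Rightarrow> real \<Rightarrow> (nat \<Rightarrow> complex) \<Rightarrow> complex \<Rightarrow> complex \<Rightarrow> nat \<Rightarrow> complex" where
  "t1vec N \<theta> h \<alpha> \<beta> i = \<alpha> * atil N \<theta> i + \<beta> * htil N \<theta> h i"

definition Amat :: "nat \<Rightarrow> nat \<Rightarrow> real \<Rightarrow> nat \<Rightarrow> nat \<Rightarrow> complex" where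
  "Amat M N \<theta> m i = steer M \<theta> m * cnj (steer N \<theta> i)"

definition Adot :: "nat \<Rightarrow> nat \<Rightarrow> real \<Rightarrow> nat \<Rightarrow> nat \<Rightarrow> complex" where
  "Adot M N \<theta> m i = vector_derivative (\<lambda>s. Amat M N s m i) (at \<theta>)"

text \<open>Tr(X^H Y R) for M x N matrices X, Y and an N x N matrix R\<close>
definition trHR :: "nat \<Rightarrow> nat \<Rightarrow> (nat \<Rightarrow> nat \<Rightarrow> complex) \<Rightarrow> (nat \<Rightarrow> nat \<Rightarrow> complex)
    \<Rightarrow> (nat \<Rightarrow> nat \<Rightarrow> complex) \<Rightarrow> complex" where
  "trHR M N X Y R = (\<Sum>i=1..N. \<Sum>k=1..N. (\<Sum>m=1..M. cnj (X m i) * Y m k) * R k i)"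

definition Rx :: "nat \<Rightarrow> real \<Rightarrow> real \<Rightarrow> (nat \<Rightarrow> complex) \<Rightarrow> (nat \<Rightarrow> nat \<Rightarrow> complex)
    \<Rightarrow> nat \<Rightarrow> nat \<Rightarrow> complex" where
  "Rx N g1 g2 t1 t i k = of_real g1 * t1 i * cnj (t1 k)
      + of_real g2 * (\<Sum>l=3..N. t l i * cnj (t l k))"

definition CRB :: "nat \<Rightarrow> nat \<Rightarrow> real \<Rightarrow> real \<Rightarrow> complex \<Rightarrow> real
    \<Rightarrow> (nat \<Rightarrow> nat \<Rightarrow> complex) \<Rightarrow> complex" where
  "CRB M N \<theta> \<sigma>R c3 L R =
     (of_real (\<sigma>R\<^sup>2) * trHR M N (Amat M N \<theta>) (Amat M N \<theta>) R) /
     (of_real (2 * (cmod c3)\<^sup>2 * L) *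
       (trHR M N (Amat M N \<theta>) (Amat M N \<theta>) R * trHR M N (Adot M N \<theta>) (Adot M N \<theta>) R
        - of_real ((cmod (trHR M N (Adot M N \<theta>) (Amat M N \<theta>) R))\<^sup>2)))"

end

theory Submission
  imports Defs
begin

(*
  Since A = b a^H, its derivative is b' a^H + b a'^H, and b^H b' = 0, a^H a' = 0 because the phase
  derivatives f_i' are centred. Every trace Tr(X^H Y R_x) therefore reduces to the forms a^H R_x a,
  a'^H R_x a' and a^H R_x a', weighted by |b|^2 = M or |b'|^2. As a is orthogonal to t_3, ..., t_N,
  only t_1 enters the forms involving a, and in the denominator of the CRB the cross term
  |Tr(Adot^H A R_x)|^2 cancels exactly the t_1-part of a'^H R_x a'. What is left of a' is the energy
  of its projection onto span{t_3, ..., t_N}; by Parseval this is |a'|^2 - |htil^H a'|^2, and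
  |htil^H a'|^2 = |a'^H h|^2 / (K - |a^H h|^2 / N) with a^H h = R + jT and
  a'^H h = -(sum f_i' t_i) + j (sum f_i' r_i).
*)

lemma cinner_commute: "cinner n y x = cnj (cinner n x y)"
  by (simp add: cinner_def mult.commute)

lemma cinner_add_right: "cinner n x (\<lambda>i. y i + z i) = cinner n x y + cinner n x z"
  by (simp add: cinner_def ring_distribs sum.distrib)

lemma cinner_diff_right: "cinner n x (\<lambda>i. y i - z i) = cinner n x y - cinner n x z"
  by (simp add: cinner_def ring_distribs sum_subtractf)

lemma cinner_scale_right: "cinner n x (\<lambda>i. c * y i) = c * cinner n x y"
  by (simp add: cinner_def sum_distrib_left mult_ac)

lemma cinner_diff_left: "cinner n (\<lambda>i. x i - y i) z = cinner n x z - cinner n y z"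
  by (simp add: cinner_def ring_distribs sum_subtractf)

lemma cinner_scale_left: "cinner n (\<lambda>i. c * x i) y = cnj c * cinner n x y"
  by (simp add: cinner_def sum_distrib_left mult_ac)

lemma cinner_divide_right: "cinner n x (\<lambda>i. y i / of_real r) = cinner n x y / of_real r"
  by (simp add: cinner_def sum_divide_distrib)

lemma cinner_divide_left: "cinner n (\<lambda>i. x i / of_real r) y = cinner n x y / of_real r"
  by (simp add: cinner_def sum_divide_distrib)

lemma cinner_self: "cinner n x x = of_real ((vnorm n x)\<^sup>2)"
proof -
  have "cinner n x x = (\<Sum>i=1..n. of_real ((cmod (x i))\<^sup>2))"
    unfolding cinner_def by (intro sum.cong refl) (metis complex_norm_square mult.commute)
  then show ?thesis
    by (simp add: vnorm_def sum_nonneg)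
qed

lemma cinner_mult_commute: "cinner n x y * cinner n y x = of_real ((cmod (cinner n x y))\<^sup>2)"
  unfolding cinner_commute[of n y x] complex_norm_square ..

lemma vnorm_nonneg: "0 \<le> vnorm n x"
  by (simp add: vnorm_def sum_nonneg)

lemma vnorm_eq_0_iff: "vnorm n x = 0 \<longleftrightarrow> (\<forall>i\<in>{1..n}. x i = 0)"
  by (simp add: vnorm_def sum_nonneg_eq_0_iff)

lemma cinner_normalize_self:
  assumes "vnorm n x \<noteq> 0"
  shows "cinner n (\<lambda>i. x i / of_real (vnorm n x)) (\<lambda>i. x i / of_real (vnorm n x)) = 1"
  using assms by (simp add: cinner_divide_left cinner_divide_right cinner_self power2_eq_square)

lemma cinner_sub_proj:
  assumes "cinner n u u = 1"
  shows "cinner n u (\<lambda>i. x i - cinner n u x * u i) = 0"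
  using assms by (simp add: cinner_diff_right cinner_scale_right)

lemma vnorm_sub_proj_sq:
  assumes "cinner n u u = 1"
  shows "(vnorm n (\<lambda>i. x i - cinner n u x * u i))\<^sup>2 = (vnorm n x)\<^sup>2 - (cmod (cinner n u x))\<^sup>2"
proof -
  let ?c = "cinner n u x"
  have "cinner n (\<lambda>i. x i - ?c * u i) (\<lambda>i. x i - ?c * u i)
      = cinner n x x - ?c * cinner n x u - cnj ?c * ?c + cnj ?c * ?c * cinner n u u"
    by (simp only: cinner_diff_left cinner_diff_right cinner_scale_left cinner_scale_right)
      (simp add: algebra_simps)
  also have "\<dots> = cinner n x x - cnj ?c * ?c"
    using assms by (simp add: cinner_commute[of n x u])
  also have "\<dots> = of_real ((vnorm n x)\<^sup>2 - (cmod ?c)\<^sup>2)"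
    by (simp only: cinner_self of_real_diff complex_norm_square mult.commute)
  finally show ?thesis
    by (simp only: cinner_self of_real_eq_iff)
qed

lemma parseval:
  assumes "\<forall>i\<in>{1..n}. v i = (\<Sum>l\<in>L. cinner n (t l) v * t l i)"
  shows "(vnorm n v)\<^sup>2 = (\<Sum>l\<in>L. (cmod (cinner n (t l) v))\<^sup>2)"
proof -
  have "cinner n v v = (\<Sum>i=1..n. cnj (v i) * (\<Sum>l\<in>L. cinner n (t l) v * t l i))"
    unfolding cinner_def[of n v v] using assms by (intro sum.cong refl) auto
  also have "\<dots> = (\<Sum>l\<in>L. cinner n (t l) v * cinner n v (t l))"
    by (simp add: cinner_def[of n v] sum_distrib_left mult_ac sum.swap[of _ L])
  also have "\<dots> = of_real (\<Sum>l\<in>L. (cmod (cinner n (t l) v))\<^sup>2)"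
    by (simp add: cinner_mult_commute)
  finally show ?thesis
    by (simp only: cinner_self of_real_eq_iff)
qed

lemma sum_cmod_cinner_complement:
  assumes u_unit: "cinner n u u = 1" and "cinner n e u = 0" and "cinner n e x = 0"
    and t_perp_u: "\<forall>l\<in>L. cinner n u (t l) = 0"
    and spans: "\<forall>v. cinner n e v = 0 \<and> cinner n u v = 0
      \<longrightarrow> (\<forall>i\<in>{1..n}. v i = (\<Sum>l\<in>L. cinner n (t l) v * t l i))"
  shows "(\<Sum>l\<in>L. (cmod (cinner n (t l) x))\<^sup>2) = (vnorm n x)\<^sup>2 - (cmod (cinner n u x))\<^sup>2"
proof -
  define v where "v = (\<lambda>i. x i - cinner n u x * u i)"
  have "cinner n e v = 0" "cinner n u v = 0"
    using assms by (simp_all add: v_def cinner_diff_right cinner_scale_right cinner_sub_proj)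
  then have "(vnorm n v)\<^sup>2 = (\<Sum>l\<in>L. (cmod (cinner n (t l) v))\<^sup>2)"
    using spans by (intro parseval) blast
  moreover have "cinner n (t l) v = cinner n (t l) x" if "l \<in> L" for l
    using t_perp_u that
    by (simp add: v_def cinner_diff_right cinner_scale_right cinner_commute[of n "t l" u])
  ultimately show ?thesis
    using vnorm_sub_proj_sq[OF u_unit, of x] by (simp add: v_def)
qed

lemma sum_const_minus_double: "(\<Sum>m=1..n. c - 2 * real m) = real n * (c - real n - 1)"
  by (induction n) (auto simp: algebra_simps)

lemma sum_const_minus_double_sq:
  "(\<Sum>m=1..n. (c - 2 * real m)\<^sup>2)
     = real n * c\<^sup>2 - 2 * c * real n * (real n + 1)
       + 2 * real n * (real n + 1) * (2 * real n + 1) / 3"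
  by (induction n) (auto simp: algebra_simps power2_eq_square add_divide_distrib)

lemma phase'_eq: "phase' n \<theta> m = pi * cos \<theta> / 2 * (real n + 1 - 2 * real m)"
  unfolding phase'_def by (simp add: field_simps)

lemma sum_phase': "(\<Sum>m=1..n. phase' n \<theta> m) = 0"
proof -
  have "(\<Sum>m=1..n. phase' n \<theta> m) = pi * cos \<theta> / 2 * (\<Sum>m=1..n. real n + 1 - 2 * real m)"
    by (simp add: phase'_eq sum_distrib_left)
  then show ?thesis
    by (simp only: sum_const_minus_double) simp
qed

lemma sum_phase'_sq:
  "(\<Sum>m=1..n. (phase' n \<theta> m)\<^sup>2) = pi\<^sup>2 * (cos \<theta>)\<^sup>2 * real n * ((real n)\<^sup>2 - 1) / 12"
proof -
  have "(\<Sum>m=1..n. (phase' n \<theta> m)\<^sup>2) = (pi * cos \<theta> / 2)\<^sup>2 * (\<Sum>m=1..n. (real n + 1 - 2 * real m)\<^sup>2)"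
    by (simp only: phase'_eq sum_distrib_left power_mult_distrib)
  then show ?thesis
    by (simp only: sum_const_minus_double_sq)
      (simp add: algebra_simps power2_eq_square power_divide)
qed

definition steer' :: "nat \<Rightarrow> real \<Rightarrow> nat \<Rightarrow> complex" where
  "steer' n \<theta> i = - \<i> * of_real (phase' n \<theta> i) * steer n \<theta> i"

lemma steer_has_vector_derivative:
  "((\<lambda>s. steer n s i) has_vector_derivative steer' n \<theta> i) (at \<theta>)"
proof -
  have "((\<lambda>s. - phase n s i) has_real_derivative - phase' n \<theta> i) (at \<theta>)"
    unfolding phase_def phase'_def by (auto intro!: derivative_eq_intros)
  from has_derivative_cis[OF this[unfolded has_field_derivative_def]] show ?thesis
    by (simp add: steer_def steer'_def has_vector_derivative_def scaleR_conv_of_real mult_ac)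
qed

lemma vnorm_steer: "vnorm n (steer n \<theta>) = sqrt (real n)"
  by (simp add: vnorm_def steer_def)

lemma cinner_steer_steer': "cinner n (steer n \<theta>) (steer' n \<theta>) = 0"
proof -
  have "cnj (steer n \<theta> i) * steer' n \<theta> i = - \<i> * of_real (phase' n \<theta> i)" for i
    by (simp add: steer'_def steer_def cis_cnj mult.left_commute[of "cis _"] cis_mult)
  then have "cinner n (steer n \<theta>) (steer' n \<theta>) = - \<i> * of_real (\<Sum>i=1..n. phase' n \<theta> i)"
    by (simp add: cinner_def sum_distrib_left)
  then show ?thesis
    by (simp only: sum_phase') simp
qed

lemma vnorm_steer'_sq:
  "(vnorm n (steer' n \<theta>))\<^sup>2 = pi\<^sup>2 * (cos \<theta>)\<^sup>2 * real n * ((real n)\<^sup>2 - 1) / 12"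
proof -
  have "(vnorm n (steer' n \<theta>))\<^sup>2 = (\<Sum>i=1..n. (cmod (steer' n \<theta> i))\<^sup>2)"
    unfolding vnorm_def by (simp add: sum_nonneg)
  also have "\<dots> = (\<Sum>i=1..n. (phase' n \<theta> i)\<^sup>2)"
    by (simp add: steer'_def steer_def norm_mult)
  finally show ?thesis
    by (simp only: sum_phase'_sq)
qed

lemma cmod_cinner_steer_sq:
  "(cmod (cinner n (steer n \<theta>) h))\<^sup>2
     = (\<Sum>i=1..n. Im (cis (phase n \<theta> i) * h i))\<^sup>2 + (\<Sum>i=1..n. Re (cis (phase n \<theta> i) * h i))\<^sup>2"
  by (simp add: cmod_power2 cinner_def steer_def cis_cnj add.commute)

lemma cmod_cinner_steer'_sq:
  "(cmod (cinner n (steer' n \<theta>) h))\<^sup>2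
     = (\<Sum>i=1..n. - phase' n \<theta> i * Im (cis (phase n \<theta> i) * h i))\<^sup>2
       + (\<Sum>i=1..n. phase' n \<theta> i * Re (cis (phase n \<theta> i) * h i))\<^sup>2"
  by (simp add: cmod_power2 cinner_def steer'_def steer_def cis_cnj mult.assoc)

lemma atil_eq: "atil n \<theta> = (\<lambda>i. steer n \<theta> i / of_real (sqrt (real n)))"
  by (simp add: fun_eq_iff atil_def vnorm_steer)

lemma cinner_atil_atil: "0 < n \<Longrightarrow> cinner n (atil n \<theta>) (atil n \<theta>) = 1"
  using cinner_normalize_self[of n "steer n \<theta>"] by (simp add: atil_def[abs_def] vnorm_steer)

lemma cinner_steer_left:
  "0 < n \<Longrightarrow> cinner n (steer n \<theta>) x = of_real (sqrt (real n)) * cinner n (atil n \<theta>) x"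
  by (simp add: atil_eq cinner_divide_left)

lemma vnorm_hperp_nonzero:
  assumes "0 < N" and "\<not> (\<exists>c. \<forall>i\<in>{1..N}. h i = c * steer N \<theta> i)"
  shows "vnorm N (hperp N \<theta> h) \<noteq> 0"
proof
  assume "vnorm N (hperp N \<theta> h) = 0"
  then have "\<forall>i\<in>{1..N}. h i = (cinner N (atil N \<theta>) h / of_real (sqrt (real N))) * steer N \<theta> i"
    by (simp add: vnorm_eq_0_iff hperp_def atil_eq)
  with assms(2) show False by blast
qed

lemma cinner_atil_htil:
  assumes "0 < N"
  shows "cinner N (atil N \<theta>) (htil N \<theta> h) = 0"
  using cinner_sub_proj[OF cinner_atil_atil[OF assms]]
  by (simp add: htil_def[abs_def] hperp_def[abs_def] cinner_divide_right)

lemma cinner_htil_htil: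
  assumes "0 < N" and "\<not> (\<exists>c. \<forall>i\<in>{1..N}. h i = c * steer N \<theta> i)"
  shows "cinner N (htil N \<theta> h) (htil N \<theta> h) = 1"
  using cinner_normalize_self[OF vnorm_hperp_nonzero[OF assms]] by (simp add: htil_def[abs_def])

lemma cmod_cinner_htil_steer'_sq:
  assumes "0 < N" and "\<not> (\<exists>c. \<forall>i\<in>{1..N}. h i = c * steer N \<theta> i)"
  shows "(cmod (cinner N (htil N \<theta> h) (steer' N \<theta>)))\<^sup>2
    = (cmod (cinner N (steer' N \<theta>) h))\<^sup>2
      / ((vnorm N h)\<^sup>2 - (cmod (cinner N (steer N \<theta>) h))\<^sup>2 / real N)"
proof -
  have "cinner N (hperp N \<theta> h) (steer' N \<theta>) = cinner N h (steer' N \<theta>)"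
    using cinner_steer_steer'[of N \<theta>] assms(1)
    by (simp add: hperp_def[abs_def] cinner_diff_left cinner_scale_left cinner_steer_left)
  then have "cmod (cinner N (htil N \<theta> h) (steer' N \<theta>))
      = cmod (cinner N (steer' N \<theta>) h) / vnorm N (hperp N \<theta> h)"
    by (simp add: htil_def[abs_def] cinner_divide_left norm_divide cinner_commute[of N h]
        vnorm_nonneg)
  moreover have "(vnorm N (hperp N \<theta> h))\<^sup>2
      = (vnorm N h)\<^sup>2 - (cmod (cinner N (steer N \<theta>) h))\<^sup>2 / real N"
    using vnorm_sub_proj_sq[OF cinner_atil_atil[OF assms(1)], of h] assms(1)
    by (simp add: hperp_def[abs_def] cinner_steer_left norm_mult power_mult_distrib)
  ultimately show ?thesis
    by (simp add: power_divide)
qed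

definition outer :: "(nat \<Rightarrow> complex) \<Rightarrow> (nat \<Rightarrow> complex) \<Rightarrow> nat \<Rightarrow> nat \<Rightarrow> complex" where
  "outer x y m i = x m * cnj (y i)"

definition qform :: "nat \<Rightarrow> (nat \<Rightarrow> nat \<Rightarrow> complex) \<Rightarrow> (nat \<Rightarrow> complex) \<Rightarrow> (nat \<Rightarrow> complex)
    \<Rightarrow> complex" where
  "qform n R x y = (\<Sum>k=1..n. \<Sum>i=1..n. cnj (x k) * R k i * y i)"

lemma Amat_eq_outer: "Amat M N \<theta> = outer (steer M \<theta>) (steer N \<theta>)"
  by (simp add: fun_eq_iff Amat_def outer_def)

lemma Adot_eq:
  "Adot M N \<theta> = (\<lambda>m i. outer (steer' M \<theta>) (steer N \<theta>) m i + outer (steer M \<theta>) (steer' N \<theta>) m i)"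
proof (intro ext)
  fix m i
  have "((\<lambda>s. steer M s m * cnj (steer N s i)) has_vector_derivative
      steer M \<theta> m * cnj (steer' N \<theta> i) + steer' M \<theta> m * cnj (steer N \<theta> i)) (at \<theta>)"
    by (intro derivative_intros steer_has_vector_derivative)
  then show "Adot M N \<theta> m i
      = outer (steer' M \<theta>) (steer N \<theta>) m i + outer (steer M \<theta>) (steer' N \<theta>) m i"
    unfolding Adot_def Amat_def outer_def
    by (subst vector_derivative_at) (simp_all add: add.commute)
qed

lemma trHR_add_left:
  "trHR M N (\<lambda>m i. X m i + X' m i) Y R = trHR M N X Y R + trHR M N X' Y R"
  by (simp add: trHR_def ring_distribs sum.distrib)

lemma trHR_add_right:
  "trHR M N X (\<lambda>m i. Y m i + Y' m i) R = trHR M N X Y R + trHR M N X Y' R"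
  by (simp add: trHR_def ring_distribs sum.distrib)

lemma trHR_outer: "trHR M N (outer x y) (outer u w) R = cinner M x u * qform N R w y"
proof -
  have "(\<Sum>m=1..M. cnj (outer x y m i) * outer u w m k) = cinner M x u * (cnj (w k) * y i)" for i k
    unfolding outer_def cinner_def by (simp add: sum_distrib_left sum_distrib_right mult_ac)
  then have "trHR M N (outer x y) (outer u w) R
      = (\<Sum>i=1..N. \<Sum>k=1..N. cinner M x u * (cnj (w k) * R k i * y i))"
    unfolding trHR_def by (simp add: mult_ac)
  then show ?thesis
    by (simp add: qform_def sum_distrib_left) (rule sum.swap)
qed

lemma qform_Rx:
  "qform n (Rx n g1 g2 t1 t) x y
     = of_real g1 * cinner n x t1 * cinner n t1 y
       + of_real g2 * (\<Sum>l=3..n. cinner n x (t l) * cinner n (t l) y)"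
proof -
  have "qform n (Rx n g1 g2 t1 t) x y
      = of_real g1 * (\<Sum>k=1..n. \<Sum>i=1..n. (cnj (x k) * t1 k) * (cnj (t1 i) * y i))
        + of_real g2 * (\<Sum>l=3..n. \<Sum>k=1..n. \<Sum>i=1..n. (cnj (x k) * t l k) * (cnj (t l i) * y i))"
    unfolding qform_def Rx_def
    by (simp add: ring_distribs sum.distrib sum_distrib_left sum_distrib_right mult_ac
        sum.swap[of _ "{3..n}"])
  then show ?thesis
    by (simp add: cinner_def sum_product)
qed

lemma trHR_Amat_Amat:
  "trHR M N (Amat M N \<theta>) (Amat M N \<theta>) R = of_nat M * qform N R (steer N \<theta>) (steer N \<theta>)"
  by (simp add: Amat_eq_outer trHR_outer cinner_self vnorm_steer)

lemma trHR_Adot_Adot: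
  "trHR M N (Adot M N \<theta>) (Adot M N \<theta>) R
     = of_real ((vnorm M (steer' M \<theta>))\<^sup>2) * qform N R (steer N \<theta>) (steer N \<theta>)
       + of_nat M * qform N R (steer' N \<theta>) (steer' N \<theta>)"
  by (simp add: Adot_eq trHR_add_left trHR_add_right trHR_outer cinner_self vnorm_steer
      cinner_steer_steer' cinner_commute[of M "steer' M \<theta>" "steer M \<theta>"])

lemma trHR_Adot_Amat:
  "trHR M N (Adot M N \<theta>) (Amat M N \<theta>) R = of_nat M * qform N R (steer N \<theta>) (steer' N \<theta>)"
  by (simp add: Adot_eq Amat_eq_outer trHR_add_left trHR_outer cinner_self vnorm_steer
      cinner_steer_steer' cinner_commute[of M "steer' M \<theta>" "steer M \<theta>"])

lemma CRB_Rx: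
  fixes N :: nat and g1 g2 :: real and t1 :: "nat \<Rightarrow> complex" and t :: "nat \<Rightarrow> nat \<Rightarrow> complex"
  defines "R \<equiv> Rx N g1 g2 t1 t"
  assumes perp: "\<forall>l\<in>{3..N}. cinner N (steer N \<theta>) (t l) = 0"
    and nondegenerate: "trHR M N (Amat M N \<theta>) (Amat M N \<theta>) R * trHR M N (Adot M N \<theta>) (Adot M N \<theta>) R
      - of_real ((cmod (trHR M N (Adot M N \<theta>) (Amat M N \<theta>) R))\<^sup>2) \<noteq> 0"
  shows "CRB M N \<theta> \<sigma>R c3 L R = of_real (\<sigma>R\<^sup>2 / (2 * (cmod c3)\<^sup>2 * L)
    / (g1 * (vnorm M (steer' M \<theta>))\<^sup>2 * (cmod (cinner N (steer N \<theta>) t1))\<^sup>2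
       + g2 * real M * (\<Sum>l=3..N. (cmod (cinner N (t l) (steer' N \<theta>)))\<^sup>2)))"
proof -
  define a a' where "a = steer N \<theta>" and "a' = steer' N \<theta>"
  define p q where "p = (cmod (cinner N a t1))\<^sup>2" and "q = (cmod (cinner N a' t1))\<^sup>2"
  define S where "S = (\<Sum>l=3..N. (cmod (cinner N (t l) a'))\<^sup>2)"
  define nb where "nb = (vnorm M (steer' M \<theta>))\<^sup>2"
  define D where "D = g1 * nb * p + g2 * real M * S"
  define X1 X2 X3 where "X1 = real M * g1 * p"
    and "X2 = nb * g1 * p + real M * (g1 * q + g2 * S)"
    and "X3 = (real M * g1)\<^sup>2 * p * q"
  have "qform N R a a = of_real (g1 * p)"
    using perp by (simp add: R_def a_def p_def qform_Rx mult.assoc cinner_mult_commute)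
  then have tr_A_A: "trHR M N (Amat M N \<theta>) (Amat M N \<theta>) R = of_real X1"
    by (simp add: trHR_Amat_Amat a_def X1_def)
  have "(\<Sum>l=3..N. cinner N a' (t l) * cinner N (t l) a') = of_real S"
    unfolding S_def of_real_sum
    by (intro sum.cong refl) (subst mult.commute, rule cinner_mult_commute)
  then have "qform N R a' a' = of_real (g1 * q + g2 * S)"
    unfolding R_def qform_Rx by (simp add: q_def mult.assoc cinner_mult_commute)
  then have tr_Adot_Adot: "trHR M N (Adot M N \<theta>) (Adot M N \<theta>) R = of_real X2"
    using \<open>qform N R a a = _\<close> by (simp add: trHR_Adot_Adot a_def a'_def nb_def X2_def)
  have "qform N R a a' = of_real g1 * cinner N a t1 * cnj (cinner N a' t1)"
    using perp by (simp add: R_def a_def qform_Rx cinner_commute[of N t1 a'])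
  then have tr_Adot_A: "(cmod (trHR M N (Adot M N \<theta>) (Amat M N \<theta>) R))\<^sup>2 = X3"
    by (simp add: trHR_Adot_Amat a_def a'_def X3_def p_def q_def norm_mult power_mult_distrib)
  \<comment> \<open>the cross term removes the t1-component of a' from the derivative trace\<close>
  have factor: "X1 * X2 - X3 = X1 * D"
    by (simp add: X1_def X2_def X3_def D_def algebra_simps power2_eq_square)
  have "X1 \<noteq> 0" "D \<noteq> 0"
    using nondegenerate unfolding tr_A_A tr_Adot_Adot tr_Adot_A
    by (simp_all only: factor flip: of_real_mult of_real_diff) simp_all
  have "CRB M N \<theta> \<sigma>R c3 L R = of_real (\<sigma>R\<^sup>2 * X1 / (2 * (cmod c3)\<^sup>2 * L * (X1 * X2 - X3)))"
    unfolding CRB_def tr_A_A tr_Adot_Adot tr_Adot_A by simp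
  also have "\<sigma>R\<^sup>2 * X1 / (2 * (cmod c3)\<^sup>2 * L * (X1 * X2 - X3)) = \<sigma>R\<^sup>2 / (2 * (cmod c3)\<^sup>2 * L) / D"
    unfolding factor using \<open>X1 \<noteq> 0\<close> by simp
  finally show ?thesis
    by (simp add: D_def nb_def S_def p_def a_def a'_def)
qed

theorem lemma1:
  fixes N M :: nat and \<theta> P \<tau> \<sigma>R L :: real and \<alpha> \<beta> c3 :: complex
    and h :: "nat \<Rightarrow> complex" and t :: "nat \<Rightarrow> nat \<Rightarrow> complex"
  assumes N3: "N \<ge> 3" and M2: "M \<ge> 2"
    and h_not_par: "\<not> (\<exists>c. \<forall>i\<in>{1..N}. h i = c * steer N \<theta> i)"
    and P: "P > 0" and tau: "0 \<le> \<tau>" "\<tau> \<le> 1" and sig: "\<sigma>R > 0"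
    and c3: "c3 \<noteq> 0" and L: "L \<ge> 1"
    and t_orthonormal: "\<forall>l\<in>{3..N}. \<forall>l'\<in>{3..N}.
        cinner N (t l) (t l') = (if l = l' then 1 else 0)"
    and t_perp_a: "\<forall>l\<in>{3..N}. cinner N (atil N \<theta>) (t l) = 0"
    and t_perp_h: "\<forall>l\<in>{3..N}. cinner N (htil N \<theta> h) (t l) = 0"
    and t_spans: "\<forall>v. cinner N (atil N \<theta>) v = 0 \<and> cinner N (htil N \<theta> h) v = 0
        \<longrightarrow> (\<forall>i\<in>{1..N}. v i = (\<Sum>l=3..N. cinner N (t l) v * t l i))"
    and well_defined:
      "(let Rx' = Rx N (P * \<tau>) ((1 - \<tau>) * P / (real N - 2)) (t1vec N \<theta> h \<alpha> \<beta>) t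
        in trHR M N (Amat M N \<theta>) (Amat M N \<theta>) Rx' * trHR M N (Adot M N \<theta>) (Adot M N \<theta>) Rx'
           - of_real ((cmod (trHR M N (Adot M N \<theta>) (Amat M N \<theta>) Rx'))\<^sup>2)) \<noteq> 0"
  shows "CRB M N \<theta> \<sigma>R c3 L (Rx N (P * \<tau>) ((1 - \<tau>) * P / (real N - 2)) (t1vec N \<theta> h \<alpha> \<beta>) t)
       = of_real (
          let g1 = P * \<tau>; g2 = (1 - \<tau>) * P / (real N - 2);
              Q = \<sigma>R\<^sup>2 / (2 * (cmod c3)\<^sup>2 * L);
              nb2 = pi\<^sup>2 * (cos \<theta>)\<^sup>2 * real M * ((real M)\<^sup>2 - 1) / 12;
              na2 = pi\<^sup>2 * (cos \<theta>)\<^sup>2 * real N * ((real N)\<^sup>2 - 1) / 12;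
              r = (\<lambda>i. Re (cis (phase N \<theta> i) * h i));
              ti = (\<lambda>i. Im (cis (phase N \<theta> i) * h i));
              k = (\<lambda>i. (cmod (h i))\<^sup>2);
              R = (\<Sum>i=1..N. r i); T = (\<Sum>i=1..N. ti i); K = (\<Sum>i=1..N. k i)
          in Q / (g1 * nb2 * real N * (cmod \<alpha>)\<^sup>2
                  + g2 * real M * (na2 -
                     ((\<Sum>i=1..N. - phase' N \<theta> i * ti i)\<^sup>2 + (\<Sum>i=1..N. phase' N \<theta> i * r i)\<^sup>2)
                     / (K - (T\<^sup>2 + R\<^sup>2) / real N))))"
proof -
  have N: "0 < N" using N3 by simp
  have perp: "\<forall>l\<in>{3..N}. cinner N (steer N \<theta>) (t l) = 0"
    using t_perp_a N by (simp add: cinner_steer_left)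
  have "cinner N (steer N \<theta>) (t1vec N \<theta> h \<alpha> \<beta>) = of_real (sqrt (real N)) * \<alpha>"
    using N by (simp add: t1vec_def[abs_def] cinner_steer_left cinner_add_right cinner_scale_right
        cinner_atil_atil cinner_atil_htil)
  then have norm_steer_t1: "(cmod (cinner N (steer N \<theta>) (t1vec N \<theta> h \<alpha> \<beta>)))\<^sup>2 = real N * (cmod \<alpha>)\<^sup>2"
    by (simp add: norm_mult power_mult_distrib)
  have "cinner N (atil N \<theta>) (steer' N \<theta>) = 0"
    using cinner_steer_steer'[of N \<theta>] N by (simp add: cinner_steer_left)
  then have sum_t_steer': "(\<Sum>l=3..N. (cmod (cinner N (t l) (steer' N \<theta>)))\<^sup>2)
      = (vnorm N (steer' N \<theta>))\<^sup>2 - (cmod (cinner N (htil N \<theta> h) (steer' N \<theta>)))\<^sup>2"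
    using t_perp_h t_spans cinner_htil_htil[OF N h_not_par] cinner_atil_htil[OF N]
    by (intro sum_cmod_cinner_complement[where e = "atil N \<theta>"]) auto
  have vnorm_h: "(vnorm N h)\<^sup>2 = (\<Sum>i=1..N. (cmod (h i))\<^sup>2)"
    by (simp add: vnorm_def sum_nonneg)
  show ?thesis
    unfolding CRB_Rx[OF perp well_defined[unfolded Let_def]] norm_steer_t1 sum_t_steer'
      vnorm_steer'_sq
      cmod_cinner_htil_steer'_sq[OF N h_not_par] cmod_cinner_steer'_sq[of N \<theta> h]
      cmod_cinner_steer_sq[of N \<theta> h] vnorm_h
    by (simp add: Let_def mult.assoc)
qed

end
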